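(* Let $\Bbbk$ be a field of characteristic $0$ and let $Q_1$ be the quiver with vertices $\{1,2\}$ and a single arrow $t:1\to2$. The zero double bracket is the unique $B$-linear double quasi-Poisson bracket on the path algebra $\Bbbk Q_1$, where $B=\Bbbk e_1\oplus\Bbbk e_2$.
   Context: The path algebra $\Bbbk Q_1$ is generated by $e_1,e_2,t$ with $e_ie_j=\delta_{ij}e_i$, $e_1+e_2=1$, $t=e_1te_2$. $\otimes=\otimes_\Bbbk$; Sweedler notation $d=d'\otimes d''$; outer structure $x(d'\otimes d'')y=xd'\otimes d''y$, inner structure $x*(d'\otimes d'')*y=d'y\otimes xd''$. A $B$-linear double bracket is a $\Bbbk$-bilinear map $A\times A\to A\otimes A$ vanishing when an argument lies in $B$, with $\{\!\{a,b\}\!\}=-\{\!\{b,a\}\!\}''\otimes\{\!\{b,a\}\!\}'$ and $\{\!\{a,bc\}\!\}=\{\!\{a,b\}\!\}c+b\{\!\{a,c\}\!\}$. Triple bracket: $\{\!\{a,b,c\}\!\}=\{\!\{a,\{\!\{b,c\}\!\}'\}\!\}\otimes\{\!\{b,c\}\!\}''+\tau\{\!\{b,\{\!\{c,a\}\!\}'\}\!\}\otimes\{\!\{c,a\}\!\}''+\tau^2\{\!\{c,\{\!\{a,b\}\!\}'\}\!\}\otimes\{\!\{a,b\}\!\}''$, $\tau(x_1\otimes x_2\otimes x_3)=x_3\otimes x_1\otimes x_2$. Quasi-Poisson: $\{\!\{a,b,c\}\!\}=\frac14\sum_{s=1,2}(ce_sa\otimes e_sb\otimes e_s-ce_sa\otimes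 e_s\otimes be_s-ce_s\otimes ae_sb\otimes e_s+ce_s\otimes ae_s\otimes be_s-e_sa\otimes e_sb\otimes e_sc+e_sa\otimes e_s\otimes be_sc+e_s\otimes ae_sb\otimes e_sc-e_s\otimes ae_s\otimes be_sc)$ for all $a,b,c$. *)

theory Defs
  imports Main
begin

text \<open>The path algebra kQ1 with k-basis e1, e2, t (t = e1 t e2). Elements of kQ1 are
  coefficient functions on the basis; A (x) A and A (x) A (x) A are coefficient
  functions on pairs / triples of basis elements.\<close>

datatype pb = E1 | E2 | T

lemma UNIV_pb: "(UNIV :: pb set) = {E1, E2, T}"
  using pb.exhaust by auto

instance pb :: finite
  by standard (simp add: UNIV_pb)

type_synonym 'k alg = "pb \<Rightarrow> 'k"
type_synonym 'k ten2 = "pb \<Rightarrow> pb \<Rightarrow> 'k"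
type_synonym 'k ten3 = "pb \<Rightarrow> pb \<Rightarrow> pb \<Rightarrow> 'k"

definition bv :: "pb \<Rightarrow> 'k::field alg" where
  "bv p = (\<lambda>r. if r = p then 1 else 0)"

fun bmul :: "pb \<Rightarrow> pb \<Rightarrow> pb option" where
  "bmul E1 E1 = Some E1"
| "bmul E2 E2 = Some E2"
| "bmul E1 T = Some T"
| "bmul T E2 = Some T"
| "bmul _ _ = None"

definition amul :: "'k::field alg \<Rightarrow> 'k alg \<Rightarrow> 'k alg" where
  "amul x y = (\<lambda>r. \<Sum>p\<in>UNIV. \<Sum>q\<in>UNIV. if bmul p q = Some r then x p * y q else 0)"

definition in_B :: "'k::field alg \<Rightarrow> bool" where
  "in_B x \<longleftrightarrow> x T = 0"

text \<open>Outer bimodule structure: x (d' (x) d'') = x d' (x) d'' and (d' (x) d'') y = d' (x) d'' y.\<close>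
definition omul_left :: "'k::field alg \<Rightarrow> 'k ten2 \<Rightarrow> 'k ten2" where
  "omul_left x d = (\<lambda>i j. \<Sum>p\<in>UNIV. amul x (bv p) i * d p j)"

definition omul_right :: "'k::field ten2 \<Rightarrow> 'k alg \<Rightarrow> 'k ten2" where
  "omul_right d y = (\<lambda>i j. \<Sum>q\<in>UNIV. d i q * amul (bv q) y j)"

definition B_linear_double_bracket :: "('k::field alg \<Rightarrow> 'k alg \<Rightarrow> 'k ten2) \<Rightarrow> bool" where
  "B_linear_double_bracket br \<longleftrightarrow>
     (\<forall>x y z. br (\<lambda>p. x p + y p) z = (\<lambda>i j. br x z i j + br y z i j)) \<and>
     (\<forall>c x z. br (\<lambda>p. c * x p) z = (\<lambda>i j. c * br x z i j)) \<and>
     (\<forall>x y z. br z (\<lambda>p. x p + y p) = (\<lambda>i j. br z x i j + br z y i j)) \<and>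
     (\<forall>c x z. br z (\<lambda>p. c * x p) = (\<lambda>i j. c * br z x i j)) \<and>
     (\<forall>a b. in_B b \<longrightarrow> br a b = (\<lambda>i j. 0) \<and> br b a = (\<lambda>i j. 0)) \<and>
     (\<forall>a b. br a b = (\<lambda>i j. - br b a j i)) \<and>
     (\<forall>a b c. br a (amul b c) = (\<lambda>i j. omul_right (br a b) c i j + omul_left b (br a c) i j))"

text \<open>{{a, d'}} (x) d'' extended linearly in d.\<close>
definition brL :: "('k::field alg \<Rightarrow> 'k alg \<Rightarrow> 'k ten2) \<Rightarrow> 'k alg \<Rightarrow> 'k ten2 \<Rightarrow> 'k ten3" where
  "brL br a d = (\<lambda>i j k. \<Sum>p\<in>UNIV. d p k * br a (bv p) i j)"

definition tau :: "'k ten3 \<Rightarrow> 'k ten3" where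
  "tau D = (\<lambda>i j k. D j k i)"

definition triple_bracket :: "('k::field alg \<Rightarrow> 'k alg \<Rightarrow> 'k ten2) \<Rightarrow> 'k alg \<Rightarrow> 'k alg \<Rightarrow> 'k alg \<Rightarrow> 'k ten3" where
  "triple_bracket br a b c = (\<lambda>i j k.
      brL br a (br b c) i j k + tau (brL br b (br c a)) i j k + tau (tau (brL br c (br a b))) i j k)"

definition tens3 :: "'k::field alg \<Rightarrow> 'k alg \<Rightarrow> 'k alg \<Rightarrow> 'k ten3" where
  "tens3 x y z = (\<lambda>i j k. x i * y j * z k)"

definition qP_rhs :: "'k::field alg \<Rightarrow> 'k alg \<Rightarrow> 'k alg \<Rightarrow> 'k ten3" where
  "qP_rhs a b c = (\<lambda>i j k. (1/4) * (\<Sum>s\<in>{E1, E2}. let e = bv s in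
       tens3 (amul (amul c e) a) (amul e b) e i j k
     - tens3 (amul (amul c e) a) e (amul b e) i j k
     - tens3 (amul c e) (amul (amul a e) b) e i j k
     + tens3 (amul c e) (amul a e) (amul b e) i j k
     - tens3 (amul e a) (amul e b) (amul e c) i j k
     + tens3 (amul e a) e (amul (amul b e) c) i j k
     + tens3 e (amul (amul a e) b) (amul e c) i j k
     - tens3 e (amul a e) (amul (amul b e) c) i j k))"

definition quasi_Poisson :: "('k::field alg \<Rightarrow> 'k alg \<Rightarrow> 'k ten2) \<Rightarrow> bool" where
  "quasi_Poisson br \<longleftrightarrow> (\<forall>a b c. triple_bracket br a b c = qP_rhs a b c)"

end

theory Submission
  imports Defs
begin

text \<open>Every element is a B-part plus a multiple of t, and a B-linear bracket kills the B-parts,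
  so it is determined by D = {{t,t}}.  Leibniz applied to t = e1 t and t = t e2 gives
  D = e1 D and D = D e2, i.e. D lies in e1 A (x) A e2; skew-symmetry then moves both legs
  into k t, and D = -D forces D = 0 in characteristic different from 2.  Conversely the
  right-hand side of the quasi-Poisson identity vanishes identically on kQ1, so the zero
  bracket is quasi-Poisson.\<close>

lemma amul_apply:
  "amul x y r = (case r of E1 \<Rightarrow> x E1 * y E1 | E2 \<Rightarrow> x E2 * y E2 | T \<Rightarrow> x E1 * y T + x T * y E2)"
  unfolding amul_def by (simp add: UNIV_pb split: pb.splits)

lemma amul_bv_E1_T: "amul (bv E1) (bv T) = (bv T :: 'k::field alg)"
  and amul_bv_T_E2: "amul (bv T) (bv E2) = (bv T :: 'k::field alg)"
  by (auto simp: amul_apply bv_def split: pb.splits)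

lemma in_B_bv_E1: "in_B (bv E1)"
  and in_B_bv_E2: "in_B (bv E2)"
  unfolding in_B_def bv_def by auto

lemma in_B_drop_T: "in_B (\<lambda>p. if p = T then 0 else a p)"
  unfolding in_B_def by simp

lemma alg_split_B_T: "a = (\<lambda>p. (if p = T then 0 else a p) + a T * bv T p)"
  unfolding bv_def by auto

lemma omul_left_bv_E1_apply_E2: "omul_left (bv E1) d E2 j = (0 :: 'k::field)"
  unfolding omul_left_def by (simp add: amul_apply bv_def)

lemma omul_right_bv_E2_apply_E1: "omul_right d (bv E2) i E1 = (0 :: 'k::field)"
  unfolding omul_right_def by (simp add: amul_apply bv_def)

lemma qP_rhs_eq_zero: "qP_rhs a b c = (\<lambda>i j k. 0 :: 'k::field)"
proof (intro ext)
  fix i j k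
  show "qP_rhs a b c i j k = 0"
    unfolding qP_rhs_def tens3_def Let_def
    by (cases i; cases j; cases k) (simp_all add: amul_apply bv_def)
qed

lemma zero_B_linear_double_bracket: "B_linear_double_bracket (\<lambda>a b i j. 0 :: 'k::field)"
  unfolding B_linear_double_bracket_def omul_left_def omul_right_def by simp

lemma zero_quasi_Poisson: "quasi_Poisson (\<lambda>a b i j. 0 :: 'k::field)"
  unfolding quasi_Poisson_def triple_bracket_def brL_def tau_def qP_rhs_eq_zero by simp

context
  fixes br :: "'k::field alg \<Rightarrow> 'k alg \<Rightarrow> 'k ten2"
  assumes br: "B_linear_double_bracket br"
begin

lemma B_linear_bracket_add_left: "br (\<lambda>p. x p + y p) z = (\<lambda>i j. br x z i j + br y z i j)"
  and B_linear_bracket_smult_left: "br (\<lambda>p. s * x p) z = (\<lambda>i j. s * br x z i j)"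
  and B_linear_bracket_add_right: "br z (\<lambda>p. x p + y p) = (\<lambda>i j. br z x i j + br z y i j)"
  and B_linear_bracket_smult_right: "br z (\<lambda>p. s * x p) = (\<lambda>i j. s * br z x i j)"
  and B_linear_bracket_in_B_right: "in_B b \<Longrightarrow> br a b = (\<lambda>i j. 0)"
  and B_linear_bracket_in_B_left: "in_B b \<Longrightarrow> br b a = (\<lambda>i j. 0)"
  and B_linear_bracket_skew: "br a b i j = - br b a j i"
  and B_linear_bracket_Leibniz:
    "br a (amul b c) = (\<lambda>i j. omul_right (br a b) c i j + omul_left b (br a c) i j)"
  using br unfolding B_linear_double_bracket_def by meson+

lemma B_linear_bracket_eq_T_T: "br a b = (\<lambda>i j. a T * b T * br (bv T) (bv T) i j)"
proof -
  have "br a b = br (\<lambda>p. (if p = T then 0 else a p) + a T * bv T p) b"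
    by (subst alg_split_B_T) (rule refl)
  also have "\<dots> = (\<lambda>i j. a T * br (bv T) b i j)"
    by (simp only: B_linear_bracket_add_left B_linear_bracket_smult_left
        B_linear_bracket_in_B_left[OF in_B_drop_T]) simp
  also have "br (bv T) b = br (bv T) (\<lambda>p. (if p = T then 0 else b p) + b T * bv T p)"
    by (subst alg_split_B_T) (rule refl)
  also have "\<dots> = (\<lambda>i j. b T * br (bv T) (bv T) i j)"
    by (simp only: B_linear_bracket_add_right B_linear_bracket_smult_right
        B_linear_bracket_in_B_right[OF in_B_drop_T]) simp
  finally show ?thesis
    by (simp add: mult.assoc)
qed

lemma B_linear_bracket_T_T_eq_zero:
  assumes two: "(2::'k) \<noteq> 0"
  shows "br (bv T) (bv T) = (\<lambda>i j. 0)"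
proof -
  define D where "D = br (bv T) (bv T)"
  have D_left: "D = (\<lambda>i j. omul_left (bv E1) D i j)"
    using B_linear_bracket_Leibniz[of "bv T" "bv E1" "bv T"]
    by (simp add: D_def amul_bv_E1_T B_linear_bracket_in_B_right[OF in_B_bv_E1] omul_right_def)
  have D_right: "D = (\<lambda>i j. omul_right D (bv E2) i j)"
    using B_linear_bracket_Leibniz[of "bv T" "bv T" "bv E2"]
    by (simp add: D_def amul_bv_T_E2 B_linear_bracket_in_B_right[OF in_B_bv_E2] omul_left_def)
  have D_row_E2: "D E2 j = 0" for j
    by (subst D_left) (rule omul_left_bv_E1_apply_E2)
  have D_col_E1: "D i E1 = 0" for i
    by (subst D_right) (rule omul_right_bv_E2_apply_E1)
  have D_skew: "D i j = - D j i" for i j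
    unfolding D_def by (rule B_linear_bracket_skew)
  have D_T_T: "D T T = 0"
    using D_skew[of T T] two by (simp add: eq_neg_iff_add_eq_0 flip: mult_2)
  have "D i j = 0" for i j
    using D_row_E2 D_col_E1 D_T_T D_skew[of E1 j] D_skew[of T E2]
    by (cases i; cases j) simp_all
  then show ?thesis
    unfolding D_def by blast
qed

end

lemma B_linear_double_bracket_eq_zero:
  assumes "B_linear_double_bracket br" and "(2::'k::field) \<noteq> 0"
  shows "br = (\<lambda>a b i j. 0 :: 'k)"
  using B_linear_bracket_eq_T_T[OF assms(1)] B_linear_bracket_T_T_eq_zero[OF assms]
  by (intro ext) simp

theorem lemma4p3:
  fixes br :: "(pb \<Rightarrow> 'k::field_char_0) \<Rightarrow> (pb \<Rightarrow> 'k) \<Rightarrow> (pb \<Rightarrow> pb \<Rightarrow> 'k)"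
  shows "(B_linear_double_bracket br \<and> quasi_Poisson br) \<longleftrightarrow> br = (\<lambda>a b i j. 0)"
  using B_linear_double_bracket_eq_zero[of br] zero_B_linear_double_bracket zero_quasi_Poisson
  by auto

end
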